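(* For each $\clubsuit\in\{\mathbf K^p,\mathbf T^p,\mathbf B^p,\mathbf V,\mathbf{KB4}^p,\mathbf I,\mathbf O,\mathbf C\}$, $\vdash_\clubsuit$ is strongly complete with respect to $\mathcal C_\clubsuit$: for every $\Gamma\subseteq Form$ and $\varphi\in Form$, if $\Gamma\models_{\mathcal C_\clubsuit}\varphi$ then $\Gamma\vdash_\clubsuit\varphi$.
   Context: Fix a countable set $P0$ of propositional variables; $Form$: $\varphi::=p\mid\bot\mid(\varphi\wedge\varphi)\mid(\varphi\to\varphi)$ ($\wedge$ left-associative, binds tighter than $\to$). A model is $\mathfrak M=(W,R,V)$ with $W\neq\emptyset$, $R\subseteq W\times W$, $V:P0\to\wp(W)$; pointed model $(\mathfrak M,s)$, $s\in W$. Satisfaction: $\bot$ never true; $p$ true at $s$ iff $s\in V(p)$; $\wedge$ pointwise; $\mathfrak M,s\models\varphi\to\psi$ iff for all $t$ with $sRt$, $\mathfrak M,t\models\varphi$ implies $\mathfrak M,t\models\psi$. For $X\subseteq W$: $R[X]=\{t:\exists s\in X,\ sRt\}$, $R^\Box(X)=\{s:\forall t\,(sRt\Rightarrow t\in X)\}$. A proposition of $(W,R)$ is $X\subseteq W$ with $R[X]\cap R^\Box(R[X])\subseteq X$; an interpretation is a model with every $V(p)$ a proposition. Classes of models: $\mathcal D_{\mathbf K^p}$ all interpretations; $\mathcal D_{\mathbf T^p}$ reflexive interpretations; $\mathcal D_{\mathbf B^p}$ symmetric; $\mathcal D_{\mathbf V}$ transitive; $\mathcal D_{\mathbf{KB4}^p}$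 symmetric and transitive; $\mathcal D_{\mathbf I}$ reflexive and transitive; $\mathcal D_{\mathbf O}$ reflexive and symmetric; $\mathcal D_{\mathbf C}$ reflexive, symmetric and transitive interpretations. $\mathcal C_\clubsuit=\{(\mathfrak M,s):\mathfrak M\in\mathcal D_\clubsuit,\ s\in\mathfrak M\}$. $\Gamma\models_{\mathcal C}\varphi$ iff for every $(\mathfrak M,s)\in\mathcal C$, if $\mathfrak M,s$ satisfies all of $\Gamma$ then $\mathfrak M,s\models\varphi$. Sequents are pairs $(\Gamma,\varphi)$, $\Gamma\subseteq Form$ arbitrary; $Sqt$ the set of them. For $\vdash\subseteq Sqt$, $\Gamma\vdash\varphi$ means $(\Gamma,\varphi)\in\vdash$, $\psi\vdash\varphi$ means $\{\psi\}\vdash\varphi$, $\vdash\varphi$ means $\emptyset\vdash\varphi$. Rules (for all $\Gamma,\Delta\subseteq Form$, $p\in P0$, formulas): (A) $\Gamma\cup\{\varphi\}\vdash\varphi$; (Mon) $\Gamma\subseteq\Delta$, $\Gamma\vdash\varphi\Rightarrow\Delta\vdash\varphi$; (Cut) $\Gamma\cup\{\psi\}\vdash\varphi$, $\Delta\vdash\psi\Rightarrow\Gamma\cup\Delta\vdash\varphi$; ($\bot$) $\bot\vdash\varphi$; ($\wedge$I) $\{\varphi,\psi\}\vdash\varphi\wedge\psi$; ($\wedge$E) $\varphi\wedge\psi\vdash\varphi$, $\varphi\wedge\psi\vdash\psi$; ($\to$0) $\vdash\varphi\to\varphi$; ($\to$1) $\Gamma\vdash\varphi\Rightarrow\{\psi\to\chi:\chi\in\Gamma\}\vdash\psi\to\varphi$;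 ($\to$2) $\{\varphi\to\psi,\psi\to\chi\}\vdash\varphi\to\chi$; (Refl) $\{\varphi,\varphi\to\psi\}\vdash\psi$; (Tran) $\varphi\to\psi\vdash(\bot\to\bot)\to(\varphi\to\psi)$; (Sym1) $\Gamma\cup\{\psi\}\vdash\chi$ and $\Gamma\cup\{(\varphi\to\psi)\to\bot\}\vdash\chi\Rightarrow\Gamma\cup\{\varphi\}\vdash\chi$; (Sym2) $\{\alpha\wedge\psi\to\chi,\alpha\wedge((\varphi\to\psi)\to\bot)\to\chi\}\vdash\alpha\wedge\varphi\to\chi$; (Prop$^-$) $p\vdash((\bot\to\bot)\to\bot)\to p$; (Prop$_{tr}$) $p\vdash(\bot\to\bot)\to p$; (Prop$_{sy}$) $p\vdash((p\to\bot)\to\bot)\to p$. Let BASE = (A),(Mon),(Cut),($\bot$),($\wedge$I),($\wedge$E),($\to$0),($\to$1),($\to$2). Each $\vdash_\clubsuit$ is the smallest relation $\subseteq Sqt$ satisfying BASE plus: $\mathbf K^p$: (Prop$^-$); $\mathbf T^p$: (Refl),(Prop$^-$); $\mathbf B^p$: (Sym1),(Sym2),(Prop$_{sy}$); $\mathbf V$: (Tran),(Prop$_{tr}$); $\mathbf{KB4}^p$: (Tran),(Sym1),(Sym2),(Prop$_{tr}$); $\mathbf I$: (Refl),(Tran),(Prop$_{tr}$); $\mathbf O$: (Refl),(Sym1),(Sym2),(Prop$_{sy}$); $\mathbf C$: (Refl),(Tran),(Sym1),(Sym2),(Prop$_{tr}$). *)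

theory Defs
  imports Main
begin

datatype form = Var nat | Bot | Conj form form | Imp form form

abbreviation Top :: form where "Top \<equiv> Imp Bot Bot"

datatype logic = Kp | Tp | Bp | LV | KB4p | LI | LO | LC

fun has_refl :: "logic \<Rightarrow> bool" where
  "has_refl Tp = True" | "has_refl LI = True" | "has_refl LO = True" | "has_refl LC = True"
| "has_refl _ = False"

fun has_sym :: "logic \<Rightarrow> bool" where
  "has_sym Bp = True" | "has_sym KB4p = True" | "has_sym LO = True" | "has_sym LC = True"
| "has_sym _ = False"

fun has_tran :: "logic \<Rightarrow> bool" where
  "has_tran LV = True" | "has_tran KB4p = True" | "has_tran LI = True" | "has_tran LC = True"
| "has_tran _ = False"

fun has_prop_minus :: "logic \<Rightarrow> bool" where
  "has_prop_minus Kp = True" | "has_prop_minus Tp = True" | "has_prop_minus _ = False"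

fun has_prop_sy :: "logic \<Rightarrow> bool" where
  "has_prop_sy Bp = True" | "has_prop_sy LO = True" | "has_prop_sy _ = False"

fun has_prop_tr :: "logic \<Rightarrow> bool" where
  "has_prop_tr LV = True" | "has_prop_tr KB4p = True" | "has_prop_tr LI = True"
| "has_prop_tr LC = True" | "has_prop_tr _ = False"

inductive deriv :: "logic \<Rightarrow> form set \<Rightarrow> form \<Rightarrow> bool" for L :: logic where
  A: "deriv L (\<Gamma> \<union> {\<phi>}) \<phi>"
| Mon: "\<Gamma> \<subseteq> \<Delta> \<Longrightarrow> deriv L \<Gamma> \<phi> \<Longrightarrow> deriv L \<Delta> \<phi>"
| Cut: "deriv L (\<Gamma> \<union> {\<psi>}) \<phi> \<Longrightarrow> deriv L \<Delta> \<psi> \<Longrightarrow> deriv L (\<Gamma> \<union> \<Delta>) \<phi>"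
| BotE: "deriv L {Bot} \<phi>"
| ConjI: "deriv L {\<phi>, \<psi>} (Conj \<phi> \<psi>)"
| ConjE1: "deriv L {Conj \<phi> \<psi>} \<phi>"
| ConjE2: "deriv L {Conj \<phi> \<psi>} \<psi>"
| Imp0: "deriv L {} (Imp \<phi> \<phi>)"
| Imp1: "deriv L \<Gamma> \<phi> \<Longrightarrow> deriv L ((\<lambda>\<chi>. Imp \<psi> \<chi>) ` \<Gamma>) (Imp \<psi> \<phi>)"
| Imp2: "deriv L {Imp \<phi> \<psi>, Imp \<psi> \<chi>} (Imp \<phi> \<chi>)"
| Refl: "has_refl L \<Longrightarrow> deriv L {\<phi>, Imp \<phi> \<psi>} \<psi>"
| Tran: "has_tran L \<Longrightarrow> deriv L {Imp \<phi> \<psi>} (Imp Top (Imp \<phi> \<psi>))"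
| Sym1: "has_sym L \<Longrightarrow> deriv L (\<Gamma> \<union> {\<psi>}) \<chi> \<Longrightarrow>
          deriv L (\<Gamma> \<union> {Imp (Imp \<phi> \<psi>) Bot}) \<chi> \<Longrightarrow> deriv L (\<Gamma> \<union> {\<phi>}) \<chi>"
| Sym2: "has_sym L \<Longrightarrow> deriv L {Imp (Conj \<alpha> \<psi>) \<chi>, Imp (Conj \<alpha> (Imp (Imp \<phi> \<psi>) Bot)) \<chi>}
                                  (Imp (Conj \<alpha> \<phi>) \<chi>)"
| PropMinus: "has_prop_minus L \<Longrightarrow> deriv L {Var p} (Imp (Imp Top Bot) (Var p))"
| PropTr: "has_prop_tr L \<Longrightarrow> deriv L {Var p} (Imp Top (Var p))"
| PropSy: "has_prop_sy L \<Longrightarrow> deriv L {Var p} (Imp (Imp (Imp (Var p) Bot) Bot) (Var p))"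

fun sat :: "('w \<times> 'w) set \<Rightarrow> (nat \<Rightarrow> 'w set) \<Rightarrow> 'w \<Rightarrow> form \<Rightarrow> bool" where
  "sat R V s (Var p) = (s \<in> V p)"
| "sat R V s Bot = False"
| "sat R V s (Conj \<phi> \<psi>) = (sat R V s \<phi> \<and> sat R V s \<psi>)"
| "sat R V s (Imp \<phi> \<psi>) = (\<forall>t. (s, t) \<in> R \<longrightarrow> sat R V t \<phi> \<longrightarrow> sat R V t \<psi>)"

definition R_img :: "('w \<times> 'w) set \<Rightarrow> 'w set \<Rightarrow> 'w set" where
  "R_img R X = {t. \<exists>s\<in>X. (s, t) \<in> R}"

definition R_box :: "'w set \<Rightarrow> ('w \<times> 'w) set \<Rightarrow> 'w set \<Rightarrow> 'w set" where
  "R_box W R X = {s \<in> W. \<forall>t. (s, t) \<in> R \<longrightarrow> t \<in> X}"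

definition is_proposition :: "'w set \<Rightarrow> ('w \<times> 'w) set \<Rightarrow> 'w set \<Rightarrow> bool" where
  "is_proposition W R X \<longleftrightarrow> X \<subseteq> W \<and> R_img R X \<inter> R_box W R (R_img R X) \<subseteq> X"

definition is_model :: "'w set \<Rightarrow> ('w \<times> 'w) set \<Rightarrow> (nat \<Rightarrow> 'w set) \<Rightarrow> bool" where
  "is_model W R V \<longleftrightarrow> W \<noteq> {} \<and> R \<subseteq> W \<times> W \<and> (\<forall>p. V p \<subseteq> W)"

definition is_interpretation :: "'w set \<Rightarrow> ('w \<times> 'w) set \<Rightarrow> (nat \<Rightarrow> 'w set) \<Rightarrow> bool" where
  "is_interpretation W R V \<longleftrightarrow> is_model W R V \<and> (\<forall>p. is_proposition W R (V p))"

definition in_class :: "logic \<Rightarrow> 'w set \<Rightarrow> ('w \<times> 'w) set \<Rightarrow> (nat \<Rightarrow> 'w set) \<Rightarrow> bool" where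
  "in_class L W R V \<longleftrightarrow> is_interpretation W R V
     \<and> (has_refl L \<longrightarrow> (\<forall>s\<in>W. (s, s) \<in> R))
     \<and> (has_sym L \<longrightarrow> (\<forall>s t. (s, t) \<in> R \<longrightarrow> (t, s) \<in> R))
     \<and> (has_tran L \<longrightarrow> (\<forall>s t u. (s, t) \<in> R \<longrightarrow> (t, u) \<in> R \<longrightarrow> (s, u) \<in> R))"

definition conseq :: "logic \<Rightarrow> form set \<Rightarrow> form \<Rightarrow> bool" where
  "conseq L \<Gamma> \<phi> \<longleftrightarrow>
     (\<forall>(W :: form set set) R V s. in_class L W R V \<and> s \<in> W \<and> (\<forall>\<gamma>\<in>\<Gamma>. sat R V s \<gamma>)
        \<longrightarrow> sat R V s \<phi>)"

end

(* If \<Gamma> does not derive \<phi>, a Lindenbaum extension of \<Gamma> is a consistent theory avoiding \<phi>, prime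
   when the logic has the symmetry rules. In the canonical model the worlds are such theories, tagged
   with the theory of a predecessor, and w R v says that v is closed under modus ponens with the
   implications of w. An implication \<phi> \<rightarrow> \<psi> outside w is refuted at a maximal set that contains \<phi>
   and has no finite conjunction w-implying \<psi>; Sym2 makes this successor prime. The truth lemma then
   holds by induction on formulas, Refl, Tran and Sym1/Sym2 give the frame conditions, and the three
   Prop rules make every valuation a proposition. *)

theory Submission
  imports Defs
begin

section \<open>Derivations\<close>

lemma deriv_assm: "\<phi> \<in> \<Gamma> \<Longrightarrow> deriv L \<Gamma> \<phi>"
  using deriv.A[of L \<Gamma> \<phi>] by (simp add: insert_absorb)

lemma deriv_Top: "deriv L \<Gamma> Top"
  using deriv.Mon[OF _ deriv.Imp0[of L Bot]] by blast

lemma deriv_finite_subset: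
  "deriv L \<Gamma> \<phi> \<Longrightarrow> \<exists>\<Gamma>0 \<subseteq> \<Gamma>. finite \<Gamma>0 \<and> deriv L \<Gamma>0 \<phi>"
proof (induction rule: deriv.induct)
  case (A \<Gamma> \<phi>)
  then show ?case using deriv_assm[of \<phi> "{\<phi>}" L] by blast
next
  case (Mon \<Gamma> \<Delta> \<phi>)
  then show ?case by blast
next
  case (Cut \<Gamma> \<psi> \<phi> \<Delta>)
  then obtain G D where G: "G \<subseteq> \<Gamma> \<union> {\<psi>}" "finite G" "deriv L G \<phi>"
    and D: "D \<subseteq> \<Delta>" "finite D" "deriv L D \<psi>" by blast
  have "deriv L ((G - {\<psi>}) \<union> {\<psi>}) \<phi>" by (rule deriv.Mon[OF _ G(3)]) blast
  from deriv.Cut[OF this D(3)] G D show ?case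
    by (intro exI[of _ "(G - {\<psi>}) \<union> D"]) auto
next
  case (Imp1 \<Gamma> \<phi> \<psi>)
  then obtain G where "G \<subseteq> \<Gamma>" "finite G" "deriv L G \<phi>" by blast
  then show ?case using deriv.Imp1[of L G \<phi> \<psi>] by (intro exI[of _ "Imp \<psi> ` G"]) auto
next
  case (Sym1 \<Gamma> \<psi> \<chi> \<phi>)
  then obtain G1 G2 where G1: "G1 \<subseteq> \<Gamma> \<union> {\<psi>}" "finite G1" "deriv L G1 \<chi>"
    and G2: "G2 \<subseteq> \<Gamma> \<union> {Imp (Imp \<phi> \<psi>) Bot}" "finite G2" "deriv L G2 \<chi>" by blast
  define G where "G = (G1 - {\<psi>}) \<union> (G2 - {Imp (Imp \<phi> \<psi>) Bot})"
  have "deriv L (G \<union> {\<psi>}) \<chi>" by (rule deriv.Mon[OF _ G1(3)]) (use G1 in \<open>auto simp: G_def\<close>)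
  moreover have "deriv L (G \<union> {Imp (Imp \<phi> \<psi>) Bot}) \<chi>"
    by (rule deriv.Mon[OF _ G2(3)]) (use G2 in \<open>auto simp: G_def\<close>)
  ultimately have "deriv L (G \<union> {\<phi>}) \<chi>" using deriv.Sym1 Sym1.hyps(1) by blast
  moreover have "G \<union> {\<phi>} \<subseteq> \<Gamma> \<union> {\<phi>}" "finite (G \<union> {\<phi>})" using G1 G2 unfolding G_def by auto
  ultimately show ?case by blast
qed (meson deriv.intros finite.emptyI finite.insertI order_refl)+

lemma deriv_finite_list: "deriv L \<Gamma> \<phi> \<Longrightarrow> \<exists>xs. set xs \<subseteq> \<Gamma> \<and> deriv L (set xs) \<phi>"
  by (metis deriv_finite_subset finite_list)

lemma deriv_cut_finite:
  "finite \<Pi> \<Longrightarrow> deriv L (S \<union> \<Pi>) \<phi> \<Longrightarrow> \<forall>\<pi>\<in>\<Pi>. deriv L \<Sigma> \<pi> \<Longrightarrow> deriv L (S \<union> \<Sigma>) \<phi>"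
proof (induction \<Pi> arbitrary: S rule: finite_induct)
  case empty
  then show ?case using deriv.Mon[of S "S \<union> \<Sigma>" L \<phi>] by simp
next
  case (insert \<pi> \<Pi>)
  have "deriv L ((S \<union> \<Pi>) \<union> {\<pi>}) \<phi>" using insert.prems(1) by (simp add: Un_ac)
  then have "deriv L ((S \<union> \<Sigma>) \<union> \<Pi>) \<phi>"
    using deriv.Cut[of L "S \<union> \<Pi>" \<pi> \<phi> \<Sigma>] insert.prems(2) by (simp add: Un_ac)
  then have "deriv L ((S \<union> \<Sigma>) \<union> \<Sigma>) \<phi>" using insert.IH[of "S \<union> \<Sigma>"] insert.prems(2) by simp
  then show ?case by (simp add: Un_assoc)
qed

lemma deriv_trans: "deriv L \<Pi> \<phi> \<Longrightarrow> \<forall>\<pi>\<in>\<Pi>. deriv L \<Sigma> \<pi> \<Longrightarrow> deriv L \<Sigma> \<phi>"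
  using deriv_finite_subset[of L \<Pi> \<phi>] deriv_cut_finite[of _ L "{}" \<phi> \<Sigma>] by auto

fun conj_list :: "form list \<Rightarrow> form" where
  "conj_list [] = Top"
| "conj_list (x # xs) = Conj x (conj_list xs)"

lemma deriv_conj_list_mem: "y \<in> set ys \<Longrightarrow> deriv L {conj_list ys} y"
proof (induction ys)
  case (Cons x ys)
  show ?case
  proof (cases "y = x")
    case True
    then show ?thesis using deriv.ConjE1 by simp
  next
    case False
    then have "deriv L {conj_list ys} y" using Cons by simp
    then show ?thesis
      using deriv_trans[of L "{conj_list ys}" y] deriv.ConjE2[of L x "conj_list ys"] by simp
  qed
qed simp

lemma deriv_conj_listI: "\<forall>x\<in>set xs. deriv L \<Sigma> x \<Longrightarrow> deriv L \<Sigma> (conj_list xs)"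
proof (induction xs)
  case Nil
  then show ?case by (simp add: deriv_Top)
next
  case (Cons x xs)
  then show ?case using deriv_trans[OF deriv.ConjI[of L x "conj_list xs"], of \<Sigma>] by auto
qed

lemma deriv_conj_list_iff: "deriv L {conj_list xs} \<phi> \<longleftrightarrow> deriv L (set xs) \<phi>"
proof
  assume "deriv L {conj_list xs} \<phi>"
  moreover have "deriv L (set xs) (conj_list xs)" by (simp add: deriv_conj_listI deriv_assm)
  ultimately show "deriv L (set xs) \<phi>" by (simp add: deriv_trans)
next
  assume "deriv L (set xs) \<phi>"
  then show "deriv L {conj_list xs} \<phi>" by (simp add: deriv_trans deriv_conj_list_mem)
qed

lemma deriv_conj_list_subset:
  assumes "set zs \<subseteq> set ys" shows "deriv L {conj_list ys} (conj_list zs)"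
  unfolding deriv_conj_list_iff by (rule deriv_conj_listI) (use assms deriv_assm in auto)

section \<open>Theories and their maximal extensions\<close>

definition is_theory :: "logic \<Rightarrow> form set \<Rightarrow> bool" where
  "is_theory L \<Gamma> \<longleftrightarrow> (\<forall>\<phi>. deriv L \<Gamma> \<phi> \<longrightarrow> \<phi> \<in> \<Gamma>)"

definition is_prime :: "form set \<Rightarrow> bool" where
  "is_prime \<Gamma> \<longleftrightarrow> (\<forall>\<theta>\<in>\<Gamma>. \<forall>\<chi>. \<chi> \<in> \<Gamma> \<or> Imp (Imp \<theta> \<chi>) Bot \<in> \<Gamma>)"

definition mp_closed :: "form set \<Rightarrow> form set \<Rightarrow> bool" where
  "mp_closed \<Gamma> \<Delta> \<longleftrightarrow> (\<forall>\<alpha> \<beta>. Imp \<alpha> \<beta> \<in> \<Gamma> \<longrightarrow> \<alpha> \<in> \<Delta> \<longrightarrow> \<beta> \<in> \<Delta>)"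

definition implications :: "form set \<Rightarrow> form set" where
  "implications \<Gamma> = {Imp \<alpha> \<beta> | \<alpha> \<beta>. Imp \<alpha> \<beta> \<in> \<Gamma>}"

lemma implications_subset: "implications \<Gamma> \<subseteq> \<Gamma>"
  unfolding implications_def by blast

lemma theory_closed: "is_theory L \<Gamma> \<Longrightarrow> deriv L S \<phi> \<Longrightarrow> S \<subseteq> \<Gamma> \<Longrightarrow> \<phi> \<in> \<Gamma>"
  unfolding is_theory_def by (metis deriv.Mon)

lemma theory_Top: "is_theory L \<Gamma> \<Longrightarrow> Top \<in> \<Gamma>"
  using theory_closed[OF _ deriv.Imp0[of L Bot]] by blast

lemma theory_Conj_iff: "is_theory L \<Gamma> \<Longrightarrow> Conj \<alpha> \<beta> \<in> \<Gamma> \<longleftrightarrow> \<alpha> \<in> \<Gamma> \<and> \<beta> \<in> \<Gamma>"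
  using theory_closed[OF _ deriv.ConjI[of L \<alpha> \<beta>]] theory_closed[OF _ deriv.ConjE1[of L \<alpha> \<beta>]]
    theory_closed[OF _ deriv.ConjE2[of L \<alpha> \<beta>]]
  by blast

lemma theory_Imp_closed:
  "is_theory L \<Gamma> \<Longrightarrow> deriv L \<Sigma> \<phi> \<Longrightarrow> \<forall>\<sigma>\<in>\<Sigma>. Imp \<theta> \<sigma> \<in> \<Gamma> \<Longrightarrow> Imp \<theta> \<phi> \<in> \<Gamma>"
  using theory_closed[OF _ deriv.Imp1[of L \<Sigma> \<phi> \<theta>]] by blast

lemma theory_Imp_deriv: "is_theory L \<Gamma> \<Longrightarrow> deriv L {\<theta>} \<phi> \<Longrightarrow> Imp \<theta> \<phi> \<in> \<Gamma>"
  using theory_Imp_closed[of L \<Gamma> "{\<theta>}" \<phi> \<theta>] theory_closed[OF _ deriv.Imp0[of L \<theta>]] by blast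

lemma theory_Imp_trans: "is_theory L \<Gamma> \<Longrightarrow> Imp \<alpha> \<beta> \<in> \<Gamma> \<Longrightarrow> Imp \<beta> \<gamma> \<in> \<Gamma> \<Longrightarrow> Imp \<alpha> \<gamma> \<in> \<Gamma>"
  using theory_closed[OF _ deriv.Imp2[of L \<alpha> \<beta> \<gamma>]] by blast

lemma theory_Imp_strengthen:
  "is_theory L \<Gamma> \<Longrightarrow> deriv L {\<theta>} \<eta> \<Longrightarrow> Imp \<eta> \<phi> \<in> \<Gamma> \<Longrightarrow> Imp \<theta> \<phi> \<in> \<Gamma>"
  using theory_Imp_deriv theory_Imp_trans by blast

lemma theory_mp_closed_self: "is_theory L \<Gamma> \<Longrightarrow> has_refl L \<Longrightarrow> mp_closed \<Gamma> \<Gamma>"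
  unfolding mp_closed_def using theory_closed[OF _ deriv.Refl] by blast

lemma mp_closed_sym:
  assumes "is_prime \<Gamma>" and "Bot \<notin> \<Delta>" and "mp_closed \<Gamma> \<Delta>"
  shows "mp_closed \<Delta> \<Gamma>"
  using assms unfolding mp_closed_def is_prime_def by blast

lemma maximal_finitary_extension:
  assumes "\<forall>xs. set xs \<subseteq> B \<longrightarrow> Q xs"
  obtains \<Delta> where "B \<subseteq> \<Delta>" and "\<forall>xs. set xs \<subseteq> \<Delta> \<longrightarrow> Q xs"
    and "\<And>x. x \<notin> \<Delta> \<Longrightarrow> \<exists>xs. set xs \<subseteq> insert x \<Delta> \<and> \<not> Q xs"
proof -
  define A where "A = {\<Theta>. B \<subseteq> \<Theta> \<and> (\<forall>xs. set xs \<subseteq> \<Theta> \<longrightarrow> Q xs)}"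
  have "\<exists>M\<in>A. \<forall>X\<in>A. M \<subseteq> X \<longrightarrow> X = M"
  proof (rule subset_Zorn_nonempty)
    show "A \<noteq> {}" using assms unfolding A_def by blast
  next
    fix C assume C: "C \<noteq> {}" "subset.chain A C"
    have "Q xs" if xs: "set xs \<subseteq> \<Union>C" for xs
    proof -
      obtain X where "X \<in> C" "set xs \<subseteq> X"
        using finite_subset_Union_chain[OF _ xs C] by blast
      then show "Q xs" using C(2) unfolding A_def subset.chain_def by blast
    qed
    moreover have "B \<subseteq> \<Union>C" using C unfolding A_def subset.chain_def by blast
    ultimately show "\<Union>C \<in> A" unfolding A_def by blast
  qed
  then obtain M where M: "M \<in> A" "\<forall>X\<in>A. M \<subseteq> X \<longrightarrow> X = M" by blast
  have "\<exists>xs. set xs \<subseteq> insert x M \<and> \<not> Q xs" if "x \<notin> M" for x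
  proof (rule ccontr)
    assume "\<not> ?thesis"
    then have "insert x M \<in> A" using M(1) unfolding A_def by auto
    then show False using M(2) that by blast
  qed
  then show ?thesis using M(1) that unfolding A_def by blast
qed

definition canonical_theory :: "logic \<Rightarrow> form set \<Rightarrow> bool" where
  "canonical_theory L \<Delta> \<longleftrightarrow> is_theory L \<Delta> \<and> Bot \<notin> \<Delta> \<and> (has_sym L \<longrightarrow> is_prime \<Delta>)"

lemma maximal_nonderiving_canonical:
  assumes not_deriv: "\<not> deriv L \<Delta> \<phi>" and maximal: "\<And>x. x \<notin> \<Delta> \<Longrightarrow> deriv L (\<Delta> \<union> {x}) \<phi>"
  shows "canonical_theory L \<Delta>" and "\<phi> \<notin> \<Delta>"
proof -
  have "\<chi> \<in> \<Delta>" if "deriv L \<Delta> \<chi>" for \<chi>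
  proof (rule ccontr)
    assume "\<chi> \<notin> \<Delta>"
    then have "deriv L (\<Delta> \<union> {\<chi>}) \<phi>" by (rule maximal)
    moreover have "\<forall>\<pi>\<in>\<Delta> \<union> {\<chi>}. deriv L \<Delta> \<pi>" using that deriv_assm by auto
    ultimately show False using not_deriv deriv_trans by blast
  qed
  then have thy: "is_theory L \<Delta>" unfolding is_theory_def by blast
  show \<phi>: "\<phi> \<notin> \<Delta>" using not_deriv deriv_assm by blast
  then have "Bot \<notin> \<Delta>" using theory_closed[OF thy deriv.BotE[of L \<phi>]] by blast
  moreover have "is_prime \<Delta>" if sym: "has_sym L"
    unfolding is_prime_def
  proof (intro ballI allI)
    fix \<theta> \<chi> assume "\<theta> \<in> \<Delta>"
    then have "\<not> deriv L (\<Delta> \<union> {\<theta>}) \<phi>" using not_deriv by (simp add: insert_absorb)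
    then show "\<chi> \<in> \<Delta> \<or> Imp (Imp \<theta> \<chi>) Bot \<in> \<Delta>" using deriv.Sym1[OF sym] maximal by blast
  qed
  ultimately show "canonical_theory L \<Delta>" unfolding canonical_theory_def using thy by blast
qed

lemma lindenbaum:
  assumes "\<not> deriv L \<Gamma> \<phi>"
  obtains \<Delta> where "\<Gamma> \<subseteq> \<Delta>" "canonical_theory L \<Delta>" "\<phi> \<notin> \<Delta>"
proof -
  have "\<forall>xs. set xs \<subseteq> \<Gamma> \<longrightarrow> \<not> deriv L (set xs) \<phi>" using assms deriv.Mon by blast
  then obtain \<Delta> where "\<Gamma> \<subseteq> \<Delta>" and finitely: "\<forall>xs. set xs \<subseteq> \<Delta> \<longrightarrow> \<not> deriv L (set xs) \<phi>"
    and maximal: "\<And>x. x \<notin> \<Delta> \<Longrightarrow> \<exists>xs. set xs \<subseteq> insert x \<Delta> \<and> deriv L (set xs) \<phi>"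
    by (rule maximal_finitary_extension) auto
  moreover have "\<not> deriv L \<Delta> \<phi>" using finitely deriv_finite_list by blast
  moreover have "deriv L (\<Delta> \<union> {x}) \<phi>" if "x \<notin> \<Delta>" for x
    using maximal[OF that] deriv.Mon[of _ "\<Delta> \<union> {x}" L \<phi>] by auto
  ultimately show ?thesis using maximal_nonderiving_canonical that by blast
qed

text \<open>Maximal sets avoiding \<open>\<psi>\<close> relative to \<open>\<Gamma>\<close> are the successors refuting \<open>Imp \<phi> \<psi> \<notin> \<Gamma>\<close>.\<close>
definition avoids :: "form set \<Rightarrow> form \<Rightarrow> form set \<Rightarrow> bool" where
  "avoids \<Gamma> \<psi> \<Delta> \<longleftrightarrow> (\<forall>xs. set xs \<subseteq> \<Delta> \<longrightarrow> Imp (conj_list xs) \<psi> \<notin> \<Gamma>)"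

lemma not_avoids_insert:
  assumes \<Gamma>: "is_theory L \<Gamma>" and "\<not> avoids \<Gamma> \<psi> (insert x \<Delta>)"
  obtains zs where "set zs \<subseteq> \<Delta>" "Imp (conj_list (x # zs)) \<psi> \<in> \<Gamma>"
proof -
  obtain xs where xs: "set xs \<subseteq> insert x \<Delta>" "Imp (conj_list xs) \<psi> \<in> \<Gamma>"
    using assms(2) unfolding avoids_def by blast
  define zs where "zs = filter (\<lambda>y. y \<noteq> x) xs"
  have "set xs \<subseteq> set (x # zs)" unfolding zs_def by auto
  then have "Imp (conj_list (x # zs)) \<psi> \<in> \<Gamma>"
    using theory_Imp_strengthen[OF \<Gamma> deriv_conj_list_subset xs(2)] by blast
  moreover have "set zs \<subseteq> \<Delta>" using xs(1) unfolding zs_def by auto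
  ultimately show ?thesis using that by blast
qed

lemma maximal_avoiding_closed:
  assumes \<Gamma>: "is_theory L \<Gamma>" and avoids: "avoids \<Gamma> \<psi> \<Delta>"
    and maximal: "\<And>x. x \<notin> \<Delta> \<Longrightarrow> \<not> avoids \<Gamma> \<psi> (insert x \<Delta>)"
    and ys: "set ys \<subseteq> \<Delta>" "Imp (conj_list ys) \<chi> \<in> \<Gamma>"
  shows "\<chi> \<in> \<Delta>"
proof (rule ccontr)
  assume "\<chi> \<notin> \<Delta>"
  then obtain zs where zs: "set zs \<subseteq> \<Delta>" "Imp (conj_list (\<chi> # zs)) \<psi> \<in> \<Gamma>"
    using not_avoids_insert[OF \<Gamma> maximal] by blast
  let ?c = "conj_list (ys @ zs)"
  have "Imp ?c \<chi> \<in> \<Gamma>"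
    using theory_Imp_strengthen[OF \<Gamma> deriv_conj_list_subset ys(2)] by auto
  moreover have "Imp ?c z \<in> \<Gamma>" if "z \<in> set zs" for z
    using that theory_Imp_deriv[OF \<Gamma> deriv_conj_list_mem] by simp
  ultimately have "Imp ?c (conj_list (\<chi> # zs)) \<in> \<Gamma>"
    using theory_Imp_closed[OF \<Gamma> deriv_conj_listI, of "\<chi> # zs" "set (\<chi> # zs)"] deriv_assm by auto
  then have "Imp ?c \<psi> \<in> \<Gamma>" using theory_Imp_trans[OF \<Gamma> _ zs(2)] by blast
  then show False using avoids ys(1) zs(1) unfolding avoids_def by auto
qed

lemma deriv_Conj_conj_list:
  assumes "set zs \<subseteq> insert y (set xs)"
  shows "deriv L {Conj (conj_list xs) y} (conj_list zs)"
proof (rule deriv_conj_listI, intro ballI)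
  fix z assume "z \<in> set zs"
  then consider "z = y" | "z \<in> set xs" using assms by blast
  then show "deriv L {Conj (conj_list xs) y} z"
  proof cases
    case 1
    then show ?thesis using deriv.ConjE2 by simp
  next
    case 2
    then show ?thesis
      using deriv_trans[OF deriv_conj_list_mem] deriv.ConjE1[of L "conj_list xs" y] by blast
  qed
qed

lemma maximal_avoiding_prime:
  assumes \<Gamma>: "is_theory L \<Gamma>" and avoids: "avoids \<Gamma> \<psi> \<Delta>"
    and maximal: "\<And>x. x \<notin> \<Delta> \<Longrightarrow> \<not> avoids \<Gamma> \<psi> (insert x \<Delta>)" and sym: "has_sym L"
  shows "is_prime \<Delta>"
  unfolding is_prime_def
proof (intro ballI allI)
  fix \<theta> \<chi> assume \<theta>: "\<theta> \<in> \<Delta>"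
  let ?n = "Imp (Imp \<theta> \<chi>) Bot"
  show "\<chi> \<in> \<Delta> \<or> ?n \<in> \<Delta>"
  proof (rule ccontr)
    assume "\<not> ?thesis"
    then obtain z1 z2 where z1: "set z1 \<subseteq> \<Delta>" "Imp (conj_list (\<chi> # z1)) \<psi> \<in> \<Gamma>"
      and z2: "set z2 \<subseteq> \<Delta>" "Imp (conj_list (?n # z2)) \<psi> \<in> \<Gamma>"
      using not_avoids_insert[OF \<Gamma> maximal] by metis
    let ?a = "conj_list (z1 @ z2)"
    have "Imp (Conj ?a \<chi>) \<psi> \<in> \<Gamma>"
      using theory_Imp_strengthen[OF \<Gamma> deriv_Conj_conj_list[of "\<chi> # z1" \<chi> "z1 @ z2"] z1(2)] by auto
    moreover have "Imp (Conj ?a ?n) \<psi> \<in> \<Gamma>"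
      using theory_Imp_strengthen[OF \<Gamma> deriv_Conj_conj_list[of "?n # z2" ?n "z1 @ z2"] z2(2)] by auto
    ultimately have "Imp (Conj ?a \<theta>) \<psi> \<in> \<Gamma>"
      using theory_closed[OF \<Gamma> deriv.Sym2[OF sym, of ?a \<chi> \<psi> \<theta>]] by blast
    moreover have "deriv L {conj_list (\<theta> # z1 @ z2)} (Conj ?a \<theta>)"
      using deriv_trans[OF deriv.ConjI[of L ?a \<theta>]] deriv.ConjE1 deriv.ConjE2 by simp
    ultimately have "Imp (conj_list (\<theta> # z1 @ z2)) \<psi> \<in> \<Gamma>"
      using theory_Imp_strengthen[OF \<Gamma>] by blast
    moreover have "set (\<theta> # z1 @ z2) \<subseteq> \<Delta>" using \<theta> z1(1) z2(1) by simp
    ultimately show False using avoids unfolding avoids_def by blast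
  qed
qed

lemma exists_successor_theory:
  assumes \<Gamma>: "is_theory L \<Gamma>" and not_imp: "Imp \<phi> \<psi> \<notin> \<Gamma>"
  obtains \<Delta> where "canonical_theory L \<Delta>" "\<phi> \<in> \<Delta>" "\<psi> \<notin> \<Delta>" "mp_closed \<Gamma> \<Delta>"
    "has_tran L \<longrightarrow> implications \<Gamma> \<subseteq> \<Delta>"
proof -
  have "\<forall>xs. set xs \<subseteq> {\<phi>} \<longrightarrow> Imp (conj_list xs) \<psi> \<notin> \<Gamma>"
  proof (intro allI impI notI)
    fix xs assume "set xs \<subseteq> {\<phi>}" "Imp (conj_list xs) \<psi> \<in> \<Gamma>"
    moreover from this have "deriv L {\<phi>} (conj_list xs)" by (auto intro: deriv_conj_listI deriv_assm)
    ultimately show False using not_imp theory_Imp_strengthen[OF \<Gamma>] by blast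
  qed
  then obtain \<Delta> where \<phi>: "{\<phi>} \<subseteq> \<Delta>" and "\<forall>xs. set xs \<subseteq> \<Delta> \<longrightarrow> Imp (conj_list xs) \<psi> \<notin> \<Gamma>"
    and "\<And>x. x \<notin> \<Delta> \<Longrightarrow> \<exists>xs. set xs \<subseteq> insert x \<Delta> \<and> \<not> Imp (conj_list xs) \<psi> \<notin> \<Gamma>"
    by (rule maximal_finitary_extension) auto
  then have avoids: "avoids \<Gamma> \<psi> \<Delta>" and maximal: "\<And>x. x \<notin> \<Delta> \<Longrightarrow> \<not> avoids \<Gamma> \<psi> (insert x \<Delta>)"
    unfolding avoids_def by auto
  note closed = maximal_avoiding_closed[OF \<Gamma> avoids maximal]
  have "\<chi> \<in> \<Delta>" if "deriv L \<Delta> \<chi>" for \<chi>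
  proof -
    from deriv_finite_list[OF that] obtain ys where "set ys \<subseteq> \<Delta>" "deriv L (set ys) \<chi>" by blast
    then show ?thesis using closed theory_Imp_deriv[OF \<Gamma>] deriv_conj_list_iff by blast
  qed
  then have thy: "is_theory L \<Delta>" unfolding is_theory_def by blast
  have "Imp (conj_list [\<alpha>]) \<beta> \<in> \<Gamma>" if "Imp \<alpha> \<beta> \<in> \<Gamma>" for \<alpha> \<beta>
    using theory_Imp_strengthen[OF \<Gamma> deriv.ConjE1 that] by simp
  then have mp: "mp_closed \<Gamma> \<Delta>" unfolding mp_closed_def using closed[of "[_]"] by simp
  have "Imp (conj_list [\<psi>]) \<psi> \<in> \<Gamma>" using theory_Imp_deriv[OF \<Gamma> deriv.ConjE1] by simp
  then have \<psi>: "\<psi> \<notin> \<Delta>" using avoids unfolding avoids_def by (metis empty_set empty_subsetI insert_subset list.simps(15))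
  then have "Bot \<notin> \<Delta>" using theory_closed[OF thy deriv.BotE] by blast
  moreover have "implications \<Gamma> \<subseteq> \<Delta>" if tran: "has_tran L"
  proof
    fix \<chi> assume "\<chi> \<in> implications \<Gamma>"
    then obtain \<alpha> \<beta> where "\<chi> = Imp \<alpha> \<beta>" "Imp \<alpha> \<beta> \<in> \<Gamma>" unfolding implications_def by blast
    moreover from this have "Imp Top \<chi> \<in> \<Gamma>" using theory_closed[OF \<Gamma> deriv.Tran[OF tran]] by blast
    ultimately show "\<chi> \<in> \<Delta>" using mp theory_Top[OF thy] unfolding mp_closed_def by blast
  qed
  moreover have "has_sym L \<Longrightarrow> is_prime \<Delta>" using maximal_avoiding_prime[OF \<Gamma> avoids maximal] .
  ultimately show ?thesis using that thy \<phi> \<psi> mp unfolding canonical_theory_def by blast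
qed

section \<open>The canonical model\<close>

text \<open>A world is a pair \<open>(\<Theta>, \<Delta>)\<close> of a tag \<open>\<Theta>\<close> and a canonical theory \<open>\<Delta>\<close>. Unless the logic is
  symmetric or transitive, a successor of \<open>w\<close> must carry the theory of \<open>w\<close> as its tag (or be \<open>w\<close>
  itself in the reflexive case); this is what makes the valuations propositions under \<open>PropMinus\<close>.\<close>
definition canon_worlds :: "logic \<Rightarrow> (form set \<times> form set) set" where
  "canon_worlds L = UNIV \<times> Collect (canonical_theory L)"

definition canon_rel :: "logic \<Rightarrow> ((form set \<times> form set) \<times> (form set \<times> form set)) set" where
  "canon_rel L = {(w, v). w \<in> canon_worlds L \<and> v \<in> canon_worlds L \<and> mp_closed (snd w) (snd v)
      \<and> (has_tran L \<longrightarrow> implications (snd w) \<subseteq> snd v)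
      \<and> (has_tran L \<or> has_sym L \<or> fst v = snd w \<or> (has_refl L \<and> v = w))}"

definition canon_val :: "logic \<Rightarrow> nat \<Rightarrow> (form set \<times> form set) set" where
  "canon_val L p = {w \<in> canon_worlds L. Var p \<in> snd w}"

lemma canon_worlds_iff: "w \<in> canon_worlds L \<longleftrightarrow> canonical_theory L (snd w)"
  by (auto simp: canon_worlds_def mem_Times_iff)

lemma canon_rel_worlds: "(w, v) \<in> canon_rel L \<Longrightarrow> w \<in> canon_worlds L \<and> v \<in> canon_worlds L"
  by (simp add: canon_rel_def)

lemma canon_truth:
  assumes "w \<in> canon_worlds L"
  shows "sat (canon_rel L) (canon_val L) w \<phi> \<longleftrightarrow> \<phi> \<in> snd w"
  using assms
proof (induction \<phi> arbitrary: w)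
  case (Var p)
  then show ?case by (simp add: canon_val_def)
next
  case Bot
  then show ?case by (simp add: canon_worlds_iff canonical_theory_def)
next
  case (Conj \<phi> \<psi>)
  then have "is_theory L (snd w)" by (simp add: canon_worlds_iff canonical_theory_def)
  then show ?case using Conj by (simp add: theory_Conj_iff)
next
  case (Imp \<phi> \<psi>)
  have thy: "is_theory L (snd w)" using Imp.prems by (simp add: canon_worlds_iff canonical_theory_def)
  show ?case
  proof
    assume sat: "sat (canon_rel L) (canon_val L) w (Imp \<phi> \<psi>)"
    show "Imp \<phi> \<psi> \<in> snd w"
    proof (rule ccontr)
      assume "Imp \<phi> \<psi> \<notin> snd w"
      then obtain \<Delta> where \<Delta>: "canonical_theory L \<Delta>" "\<phi> \<in> \<Delta>" "\<psi> \<notin> \<Delta>" "mp_closed (snd w) \<Delta>"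
        "has_tran L \<longrightarrow> implications (snd w) \<subseteq> \<Delta>"
        by (rule exists_successor_theory[OF thy])
      define v where "v = (snd w, \<Delta>)"
      have v: "v \<in> canon_worlds L" using \<Delta>(1) by (simp add: canon_worlds_iff v_def)
      have "(w, v) \<in> canon_rel L"
        unfolding canon_rel_def using Imp.prems v \<Delta>(4,5) by (simp add: v_def)
      moreover have "sat (canon_rel L) (canon_val L) v \<phi>" "\<not> sat (canon_rel L) (canon_val L) v \<psi>"
        using Imp.IH[OF v] \<Delta>(2,3) by (simp_all add: v_def)
      ultimately show False using sat[unfolded sat.simps] by blast
    qed
  next
    assume imp: "Imp \<phi> \<psi> \<in> snd w"
    show "sat (canon_rel L) (canon_val L) w (Imp \<phi> \<psi>)"
    proof (unfold sat.simps, intro allI impI)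
      fix v assume wv: "(w, v) \<in> canon_rel L" and "sat (canon_rel L) (canon_val L) v \<phi>"
      then have v: "v \<in> canon_worlds L" and "\<phi> \<in> snd v" using Imp.IH canon_rel_worlds by blast+
      moreover have "mp_closed (snd w) (snd v)" using wv by (simp add: canon_rel_def)
      ultimately show "sat (canon_rel L) (canon_val L) v \<psi>"
        using Imp.IH(2)[OF v] imp unfolding mp_closed_def by blast
    qed
  qed
qed

lemma canon_rel_refl: "has_refl L \<Longrightarrow> w \<in> canon_worlds L \<Longrightarrow> (w, w) \<in> canon_rel L"
  using theory_mp_closed_self implications_subset
  unfolding canon_rel_def canon_worlds_iff canonical_theory_def by auto

lemma canon_rel_sym:
  assumes sym: "has_sym L" and wv: "(w, v) \<in> canon_rel L"
  shows "(v, w) \<in> canon_rel L"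
proof -
  have w: "canonical_theory L (snd w)" and v: "canonical_theory L (snd v)"
    and mp: "mp_closed (snd w) (snd v)"
    using wv by (auto simp: canon_rel_def canon_worlds_iff)
  then have prime: "is_prime (snd w)" and "Bot \<notin> snd v"
    using sym unfolding canonical_theory_def by auto
  then have "mp_closed (snd v) (snd w)" using mp_closed_sym mp by blast
  moreover have "implications (snd v) \<subseteq> snd w" if tran: "has_tran L"
  proof
    fix \<chi> assume "\<chi> \<in> implications (snd v)"
    then have "\<chi> \<in> snd v" and "Imp Top \<chi> \<in> snd v"
      using theory_closed[OF _ deriv.Tran[OF tran]] v unfolding implications_def canonical_theory_def
      by auto
    moreover have "\<chi> \<in> snd w \<or> Imp (Imp Top \<chi>) Bot \<in> snd w"
      using prime theory_Top w unfolding is_prime_def canonical_theory_def by blast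
    ultimately show "\<chi> \<in> snd w" using mp \<open>Bot \<notin> snd v\<close> unfolding mp_closed_def by blast
  qed
  ultimately show ?thesis using wv sym unfolding canon_rel_def by simp
qed

lemma canon_rel_trans:
  assumes tran: "has_tran L" and wv: "(w, v) \<in> canon_rel L" and vu: "(v, u) \<in> canon_rel L"
  shows "(w, u) \<in> canon_rel L"
proof -
  have wv_imp: "implications (snd w) \<subseteq> snd v" and vu_imp: "implications (snd v) \<subseteq> snd u"
    and vu_mp: "mp_closed (snd v) (snd u)"
    using tran wv vu by (simp_all add: canon_rel_def)
  then have "implications (snd w) \<subseteq> implications (snd v)" unfolding implications_def by blast
  then have "implications (snd w) \<subseteq> snd u" using vu_imp by blast
  moreover have "mp_closed (snd w) (snd u)"
    using wv_imp vu_mp unfolding mp_closed_def implications_def by blast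
  ultimately show ?thesis using wv vu tran canon_rel_worlds unfolding canon_rel_def by blast
qed

lemma canon_rel_persistent:
  assumes tr: "has_prop_tr L" and wv: "(w, v) \<in> canon_rel L" and p: "Var p \<in> snd w"
  shows "Var p \<in> snd v"
proof -
  have "is_theory L (snd w)" "is_theory L (snd v)"
    using canon_rel_worlds[OF wv] by (simp_all add: canon_worlds_iff canonical_theory_def)
  then have "Imp Top (Var p) \<in> snd w" "Top \<in> snd v"
    using theory_closed[OF _ deriv.PropTr[OF tr]] p theory_Top by auto
  moreover have "mp_closed (snd w) (snd v)" using wv by (simp add: canon_rel_def)
  ultimately show ?thesis unfolding mp_closed_def by blast
qed

lemma canon_val_proposition_sy:
  assumes "has_prop_sy L" and sym: "has_sym L"
    and v: "v \<in> R_img (canon_rel L) (canon_val L p)"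
      "v \<in> R_box (canon_worlds L) (canon_rel L) (R_img (canon_rel L) (canon_val L p))"
  shows "v \<in> canon_val L p"
proof -
  obtain w where w: "w \<in> canon_val L p" "(w, v) \<in> canon_rel L" using v(1) unfolding R_img_def by blast
  have v_world: "v \<in> canon_worlds L" using canon_rel_worlds[OF w(2)] by blast
  have "sat (canon_rel L) (canon_val L) v (Imp (Imp (Var p) Bot) Bot)"
  proof (unfold sat.simps, intro allI impI)
    fix u assume "(v, u) \<in> canon_rel L" and no_p: "\<forall>x. (u, x) \<in> canon_rel L \<longrightarrow> x \<in> canon_val L p \<longrightarrow> False"
    then obtain x where "x \<in> canon_val L p" "(x, u) \<in> canon_rel L"
      using v(2) unfolding R_box_def R_img_def by blast
    then show False using no_p canon_rel_sym[OF sym] by blast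
  qed
  then have "Imp (Imp (Var p) Bot) Bot \<in> snd v" using canon_truth[OF v_world] by blast
  moreover have "Imp (Imp (Imp (Var p) Bot) Bot) (Var p) \<in> snd w"
    using w theory_closed[OF _ deriv.PropSy[OF assms(1)]] canon_rel_worlds[OF w(2)]
    unfolding canon_val_def canon_worlds_iff canonical_theory_def by blast
  ultimately show ?thesis using w(2) v_world unfolding canon_rel_def mp_closed_def canon_val_def by blast
qed

lemma canon_val_proposition_minus:
  assumes "has_prop_minus L" and nsym: "\<not> has_sym L" and ntran: "\<not> has_tran L"
    and v: "v \<in> R_img (canon_rel L) (canon_val L p)"
      "v \<in> R_box (canon_worlds L) (canon_rel L) (R_img (canon_rel L) (canon_val L p))"
  shows "v \<in> canon_val L p"
proof -
  obtain w where w: "w \<in> canon_val L p" "(w, v) \<in> canon_rel L" using v(1) unfolding R_img_def by blast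
  have v_world: "v \<in> canon_worlds L" using canon_rel_worlds[OF w(2)] by blast
  have tagged: "fst u = snd x \<or> (has_refl L \<and> u = x)" if "(x, u) \<in> canon_rel L" for x u
    using that nsym ntran unfolding canon_rel_def by auto
  have pred_val: "\<exists>x\<in>canon_val L p. fst u = snd x \<or> (has_refl L \<and> u = x)" if "(v, u) \<in> canon_rel L" for u
    using that v(2) tagged unfolding R_box_def R_img_def by blast
  have "Var p \<in> snd v"
  proof (cases "has_refl L")
    case True
    define u where "u = (snd v, snd v)"
    have "(v, u) \<in> canon_rel L"
      using v_world theory_mp_closed_self[OF _ True] implications_subset
      unfolding canon_rel_def u_def canon_worlds_iff canonical_theory_def by auto
    then obtain x where "x \<in> canon_val L p" "fst u = snd x \<or> (has_refl L \<and> u = x)"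
      using pred_val by blast
    then show ?thesis unfolding canon_val_def u_def by auto
  next
    case False
    show ?thesis
    proof (cases "\<exists>u. (v, u) \<in> canon_rel L")
      case True
      then obtain u where "(v, u) \<in> canon_rel L" by blast
      then show ?thesis using pred_val tagged False unfolding canon_val_def by fastforce
    next
      case False
      then have "sat (canon_rel L) (canon_val L) v (Imp Top Bot)" by simp
      then have "Imp Top Bot \<in> snd v" using canon_truth[OF v_world] by blast
      moreover have "Imp (Imp Top Bot) (Var p) \<in> snd w"
        using w theory_closed[OF _ deriv.PropMinus[OF assms(1)]] canon_rel_worlds[OF w(2)]
        unfolding canon_val_def canon_worlds_iff canonical_theory_def by blast
      ultimately show ?thesis using w(2) unfolding canon_rel_def mp_closed_def by blast
    qed
  qed
  then show ?thesis using v_world unfolding canon_val_def by blast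
qed

lemma canon_in_class:
  assumes "canon_worlds L \<noteq> {}"
  shows "in_class L (canon_worlds L) (canon_rel L) (canon_val L)"
proof -
  have "is_model (canon_worlds L) (canon_rel L) (canon_val L)"
    using assms unfolding is_model_def canon_rel_def canon_val_def by auto
  moreover have "is_proposition (canon_worlds L) (canon_rel L) (canon_val L p)" for p
  proof -
    have "v \<in> canon_val L p"
      if "v \<in> R_img (canon_rel L) (canon_val L p)"
        "v \<in> R_box (canon_worlds L) (canon_rel L) (R_img (canon_rel L) (canon_val L p))" for v
    proof -
      consider "has_prop_tr L" | "has_prop_sy L" "has_sym L"
        | "has_prop_minus L" "\<not> has_sym L" "\<not> has_tran L"
        by (cases L) auto
      then show ?thesis
      proof cases
        case 1
        then show ?thesis using that(1) canon_rel_persistent canon_rel_worlds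
          unfolding R_img_def canon_val_def by blast
      qed (use that canon_val_proposition_sy canon_val_proposition_minus in blast)+
    qed
    then show ?thesis unfolding is_proposition_def canon_val_def by blast
  qed
  ultimately show ?thesis
    unfolding in_class_def is_interpretation_def using canon_rel_refl canon_rel_sym canon_rel_trans
    by blast
qed

lemma canonical_countermodel:
  assumes "\<not> deriv L \<Gamma> \<phi>"
  shows "\<exists>W R V (s :: form set \<times> form set).
    in_class L W R V \<and> s \<in> W \<and> (\<forall>\<gamma>\<in>\<Gamma>. sat R V s \<gamma>) \<and> \<not> sat R V s \<phi>"
proof -
  obtain \<Delta> where \<Delta>: "\<Gamma> \<subseteq> \<Delta>" "canonical_theory L \<Delta>" "\<phi> \<notin> \<Delta>"
    using lindenbaum[OF assms] by blast
  then have s: "(\<Delta>, \<Delta>) \<in> canon_worlds L" by (simp add: canon_worlds_iff)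
  then have "in_class L (canon_worlds L) (canon_rel L) (canon_val L)" using canon_in_class by blast
  with s show ?thesis using canon_truth[OF s] \<Delta> by fastforce
qed

section \<open>Renaming worlds\<close>

lemma sat_inj_image:
  assumes "inj f"
  shows "sat (map_prod f f ` R) (\<lambda>p. f ` V p) (f s) \<phi> \<longleftrightarrow> sat R V s \<phi>"
proof (induction \<phi> arbitrary: s)
  case (Var p)
  then show ?case using assms by (simp add: inj_image_mem_iff)
next
  case (Imp \<phi> \<psi>)
  have "(f s, t) \<in> map_prod f f ` R \<longleftrightarrow> (\<exists>t'. t = f t' \<and> (s, t') \<in> R)" for t
    using assms by (auto simp: inj_eq)
  then show ?case using Imp.IH by auto
qed auto

lemma R_img_inj_image: "inj f \<Longrightarrow> R_img (map_prod f f ` R) (f ` X) = f ` R_img R X"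
  unfolding R_img_def by (auto simp: inj_eq) force

lemma R_box_inj_image: "inj f \<Longrightarrow> R_box (f ` W) (map_prod f f ` R) (f ` Y) = f ` R_box W R Y"
  unfolding R_box_def by (auto simp: inj_eq inj_image_mem_iff) (force simp: inj_eq)

lemma in_class_inj_image:
  assumes f: "inj f" and c: "in_class L W R V"
  shows "in_class L (f ` W) (map_prod f f ` R) (\<lambda>p. f ` V p)"
  unfolding in_class_def is_interpretation_def
proof (intro conjI impI allI)
  have model: "is_model W R V" and props: "\<And>p. is_proposition W R (V p)"
    using c unfolding in_class_def is_interpretation_def by auto
  then show "is_model (f ` W) (map_prod f f ` R) (\<lambda>p. f ` V p)"
    unfolding is_model_def by (auto intro!: image_mono)
  show "is_proposition (f ` W) (map_prod f f ` R) (f ` V p)" for p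
    using props[of p] image_mono[of _ "V p" f]
    unfolding is_proposition_def R_img_inj_image[OF f] R_box_inj_image[OF f] image_Int[OF f, symmetric]
    by blast
next
  assume "has_refl L"
  then show "\<forall>s\<in>f ` W. (s, s) \<in> map_prod f f ` R" using c unfolding in_class_def by auto
next
  fix s t assume "has_sym L" "(s, t) \<in> map_prod f f ` R"
  then show "(t, s) \<in> map_prod f f ` R" using c unfolding in_class_def by auto
next
  fix s t u assume tran: "has_tran L" and "(s, t) \<in> map_prod f f ` R" "(t, u) \<in> map_prod f f ` R"
  then obtain s' t' t'' u' where "(s', t') \<in> R" "(t'', u') \<in> R" "s = f s'" "t = f t'" "t = f t''" "u = f u'"
    by auto
  moreover from this have "t' = t''" using f by (simp add: inj_eq)
  ultimately show "(s, u) \<in> map_prod f f ` R" using c tran unfolding in_class_def by auto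
qed

text \<open>Models in \<open>conseq\<close> have worlds of type \<open>form set set\<close>, so the canonical model, whose worlds are
  pairs of formula sets, is transported along an injection of pairs into formula sets.\<close>
definition encode_pair :: "form set \<times> form set \<Rightarrow> form set" where
  "encode_pair x = Conj Bot ` fst x \<union> Conj Top ` snd x"

lemma inj_encode_pair: "inj encode_pair"
proof (rule injI)
  fix x y assume eq: "encode_pair x = encode_pair y"
  have "fst z = {\<alpha>. Conj Bot \<alpha> \<in> encode_pair z}" "snd z = {\<alpha>. Conj Top \<alpha> \<in> encode_pair z}" for z
    unfolding encode_pair_def by auto
  then show "x = y" using eq by (metis prod.expand)
qed

theorem mainTheorem16:
  fixes L :: logic and \<Gamma> :: "form set" and \<phi> :: form
  assumes "conseq L \<Gamma> \<phi>"
  shows "deriv L \<Gamma> \<phi>"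
proof (rule ccontr)
  assume "\<not> deriv L \<Gamma> \<phi>"
  then obtain W R V and s :: "form set \<times> form set"
    where "in_class L W R V" "s \<in> W" "\<forall>\<gamma>\<in>\<Gamma>. sat R V s \<gamma>" "\<not> sat R V s \<phi>"
    by (blast dest: canonical_countermodel)
  then have "in_class L (encode_pair ` W) (map_prod encode_pair encode_pair ` R) (\<lambda>p. encode_pair ` V p)"
    and "encode_pair s \<in> encode_pair ` W"
    and "\<forall>\<gamma>\<in>\<Gamma>. sat (map_prod encode_pair encode_pair ` R) (\<lambda>p. encode_pair ` V p) (encode_pair s) \<gamma>"
    and "\<not> sat (map_prod encode_pair encode_pair ` R) (\<lambda>p. encode_pair ` V p) (encode_pair s) \<phi>"
    using in_class_inj_image[OF inj_encode_pair] sat_inj_image[OF inj_encode_pair] by auto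
  then show False using assms unfolding conseq_def by blast
qed

end
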